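(* Let $n$ be a positive integer and $\mathbf a\in\mathbb N^n$. For each $\mathbf j\in\{0,1\}^n$ with $\chi(\mathbf a)\trianglerighteq_1\mathbf j$, there exists a unique vector $\mathbf b\in\mathbb N^n$ with $\chi(\mathbf b)=\mathbf j$ such that $\mathcal F_{H_\top(n)}(\mathbf a,\mathbf b)$ contains an unsplittable flow; moreover, in that case $\mathcal F_{H_\top(n)}(\mathbf a,\mathbf b)$ contains exactly one unsplittable flow. For all other vectors $\mathbf b\in\mathbb N^n$ (i.e. those for which $\chi(\mathbf a)\trianglerighteq_1\chi(\mathbf b)$ fails, or which are not this unique vector for $\mathbf j=\chi(\mathbf b)$), $\mathcal F_{H_\top(n)}(\mathbf a,\mathbf b)$ has no unsplittable flows.
   Context: $H_\top(n)$ is the directed graph with vertices $(i,-1),(i,0),(i,1)$ for $1\le i\le n$ and a vertex $s$, and arcs $((i,-1),(i,0))$ and $((i,0),(i,1))$ for $1\le i\le n$, $((i,0),(i+1,0))$ for $1\le i\le n-1$, and $((n,0),s)$. $\mathcal F_{H_\top(n)}(\mathbf a,\mathbf b)$ is the set of nonnegative real arc weightings such that at each vertex outflow minus inflow equals its netflow: $a_i$ at $(i,-1)$, $-b_i$ at $(i,1)$, $0$ at $(i,0)$, and $-\sum_ia_i+\sum_ib_i$ at $s$. An unsplittable flow is an integral flow in which no two unit trajectories split; equivalently, an integral flow in which every vertex has at most one outgoing arc with positive flow and no vertex with negative netflow has an outgoing arc with positive flow. $\chi(\mathbf v)_i=1$ if $v_i>0$, else $0$. Dominance $\mathbf v\trianglerighteq\mathbf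 w$: $\sum_{k\le i}v_k\ge\sum_{k\le i}w_k$ for all $i$. For $\mathbf v\trianglerighteq\mathbf w$ with $\chi(\mathbf v)\trianglerighteq\chi(\mathbf w)$, let $Z_{\mathbf v}=\{i:v_i=0\}$, $Z_{\mathbf w}=\{i:w_i=0\}$ and form the matching $M$ by repeatedly matching the largest unmatched $i'\in Z_{\mathbf v}$ to the largest unmatched element of $Z_{\mathbf w}$ that is $\le i'$; $\mathbf v\trianglerighteq_1\mathbf w$ means $\mathbf v\trianglerighteq\mathbf w$, $\chi(\mathbf v)\trianglerighteq\chi(\mathbf w)$ and $i-j\le1$ for all $(i,j)\in M$. *)

theory Defs
  imports Complex_Main
begin

text \<open>Vertices of H_top(n): V i k stands for (i,k), S for the sink s.\<close>
datatype vtx = V nat int | S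

definition htop_verts :: "nat \<Rightarrow> vtx set" where
  "htop_verts n = {V i k | i k. 1 \<le> i \<and> i \<le> n \<and> k \<in> {-1, 0, 1}} \<union> {S}"

definition htop_arcs :: "nat \<Rightarrow> (vtx \<times> vtx) set" where
  "htop_arcs n =
     {(V i (-1), V i 0) | i. 1 \<le> i \<and> i \<le> n}
   \<union> {(V i 0, V i 1) | i. 1 \<le> i \<and> i \<le> n}
   \<union> {(V i 0, V (i+1) 0) | i. 1 \<le> i \<and> i \<le> n - 1}
   \<union> {(V n 0, S)}"

text \<open>Vectors in N^n are lists of length n; entry i (1-based) is the list element at i-1.\<close>
definition netflow :: "nat list \<Rightarrow> nat list \<Rightarrow> vtx \<Rightarrow> real" where
  "netflow a b v = (case v of
      V i k \<Rightarrow> (if k = -1 then real (a ! (i - 1))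
               else if k = 1 then - real (b ! (i - 1)) else 0)
    | S \<Rightarrow> - real (sum_list a) + real (sum_list b))"

definition flows :: "nat \<Rightarrow> nat list \<Rightarrow> nat list \<Rightarrow> (vtx \<times> vtx \<Rightarrow> real) set" where
  "flows n a b = {f. (\<forall>e. e \<notin> htop_arcs n \<longrightarrow> f e = 0)
      \<and> (\<forall>e\<in>htop_arcs n. 0 \<le> f e)
      \<and> (\<forall>v\<in>htop_verts n.
           (\<Sum>e\<in>{e\<in>htop_arcs n. fst e = v}. f e) - (\<Sum>e\<in>{e\<in>htop_arcs n. snd e = v}. f e)
             = netflow a b v)}"

definition unsplittable :: "nat \<Rightarrow> nat list \<Rightarrow> nat list \<Rightarrow> (vtx \<times> vtx \<Rightarrow> real) \<Rightarrow> bool" where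
  "unsplittable n a b f \<longleftrightarrow> f \<in> flows n a b
     \<and> (\<forall>e\<in>htop_arcs n. f e \<in> \<int>)
     \<and> (\<forall>v\<in>htop_verts n. card {e\<in>htop_arcs n. fst e = v \<and> 0 < f e} \<le> 1)
     \<and> (\<forall>v\<in>htop_verts n. netflow a b v < 0 \<longrightarrow> (\<forall>e\<in>htop_arcs n. fst e = v \<longrightarrow> f e = 0))"

definition chi :: "nat list \<Rightarrow> nat list" where
  "chi v = map (\<lambda>x. if 0 < x then 1 else 0) v"

definition dominates :: "nat list \<Rightarrow> nat list \<Rightarrow> bool" where
  "dominates v w \<longleftrightarrow> (\<forall>i\<le>length v. sum_list (take i w) \<le> sum_list (take i v))"

definition zeros :: "nat list \<Rightarrow> nat set" where
  "zeros v = {i. 1 \<le> i \<and> i \<le> length v \<and> v ! (i - 1) = 0}"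

fun greedy :: "nat list \<Rightarrow> nat set \<Rightarrow> (nat \<times> nat) list" where
  "greedy [] W = []"
| "greedy (i # is) W =
     (if \<exists>j\<in>W. j \<le> i
      then (let j = Max {j\<in>W. j \<le> i} in (i, j) # greedy is (W - {j}))
      else greedy is W)"

definition zero_matching :: "nat list \<Rightarrow> nat list \<Rightarrow> (nat \<times> nat) set" where
  "zero_matching v w = set (greedy (rev (sorted_list_of_set (zeros v))) (zeros w))"

definition dominates1 :: "nat list \<Rightarrow> nat list \<Rightarrow> bool" where
  "dominates1 v w \<longleftrightarrow> dominates v w \<and> dominates (chi v) (chi w)
      \<and> (\<forall>(i, j)\<in>zero_matching v w. i - j \<le> 1)"

end

theory Submission
  imports Defs
begin

text \<open>
  Conservation determines every flow on \<open>H_top(n)\<close>: the arc into \<open>(i,0)\<close> carries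
  \<open>a_i\<close>, the arc to \<open>(i,1)\<close> carries \<open>b_i\<close>, so the spine arc leaving \<open>(i,0)\<close> carries
  the carry \<open>c_i = \<Sum>k\<le>i. a_k - b_k\<close>. Unsplittability at \<open>(i,0)\<close> says exactly that
  \<open>c_i \<ge> 0\<close>, with \<open>c_i = 0\<close> whenever \<open>b_i > 0\<close>. Hence the flow is unique, and \<open>b\<close> is
  determined by its support (\<open>b_i = c_(i-1) + a_i\<close> when \<open>b_i > 0\<close>). Whether some \<open>b\<close> with
  support \<open>j\<close> meets these conditions is decided by peeling off the last coordinates, and
  dominance together with the greedy zero matching condition for \<open>\<chi>(a)\<close> against \<open>j\<close>
  obeys the same peeling recursion.
\<close>

section \<open>The greedy zero matching\<close>

lemma greedy_restrict:
  "(\<forall>i\<in>set is. i \<le> m) \<Longrightarrow> greedy is W = greedy is {j\<in>W. j \<le> m}"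
proof (induction "is" arbitrary: W)
  case Nil
  then show ?case by simp
next
  case (Cons i "is")
  have below: "{j\<in>{j\<in>W. j \<le> m}. j \<le> i} = {j\<in>W. j \<le> i}" using Cons.prems by auto
  have remove: "\<And>J. {j\<in>W. j \<le> m} - {J} = {j\<in>W - {J}. j \<le> m}" by auto
  have ex: "(\<exists>j\<in>{j\<in>W. j \<le> m}. j \<le> i) = (\<exists>j\<in>W. j \<le> i)" using Cons.prems by auto
  show ?case
  proof (cases "\<exists>j\<in>W. j \<le> i")
    case True
    let ?J = "Max {j\<in>W. j \<le> i}"
    have "greedy is (W - {?J}) = greedy is {j\<in>W - {?J}. j \<le> m}"
      by (rule Cons.IH) (use Cons.prems in simp)
    then show ?thesis using True ex by (simp only: greedy.simps below remove Let_def) simp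
  next
    case False
    then show ?thesis using ex Cons by (simp only: greedy.simps below) simp
  qed
qed

definition short_zero_matching :: "nat list \<Rightarrow> nat list \<Rightarrow> bool" where
  "short_zero_matching v w \<longleftrightarrow> (\<forall>(i, j)\<in>zero_matching v w. i - j \<le> 1)"

lemma zeros_snoc: "zeros (v @ [x]) = zeros v \<union> (if x = 0 then {Suc (length v)} else {})"
  unfolding zeros_def by (auto simp: nth_append le_Suc_eq)

lemma zeros_bounds: "i \<in> zeros v \<Longrightarrow> 1 \<le> i \<and> i \<le> length v"
  unfolding zeros_def by auto

lemma finite_zeros: "finite (zeros v)"
  by (rule finite_subset[of _ "{..length v}"]) (auto dest: zeros_bounds)

lemma sorted_list_of_set_insert_greater:
  assumes "finite Z" "\<forall>z\<in>Z. z < m"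
  shows "sorted_list_of_set (insert m Z) = sorted_list_of_set Z @ [m :: nat]"
  by (rule sorted_distinct_set_unique)
    (use assms in \<open>auto simp del: sorted_list_of_set_insert_remove sorted_list_of_set_insert
      simp: sorted_append\<close>)

lemma rev_sorted_zeros_snoc_zero:
  "rev (sorted_list_of_set (zeros (v @ [0]))) = Suc (length v) # rev (sorted_list_of_set (zeros v))"
proof -
  have "zeros (v @ [0]) = insert (Suc (length v)) (zeros v)" by (simp add: zeros_snoc)
  moreover have "\<forall>z\<in>zeros v. z < Suc (length v)" using zeros_bounds by force
  ultimately show ?thesis using sorted_list_of_set_insert_greater[OF finite_zeros] by simp
qed

lemma short_zero_matching_snoc_nonzero:
  assumes "length v = length w" "x \<noteq> 0"
  shows "short_zero_matching (v @ [x]) (w @ [y]) = short_zero_matching v w"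
proof -
  have zv: "zeros (v @ [x]) = zeros v" using assms by (simp add: zeros_snoc)
  have "\<forall>i\<in>set (rev (sorted_list_of_set (zeros v))). i \<le> length v"
    using zeros_bounds finite_zeros by auto
  then have "greedy (rev (sorted_list_of_set (zeros v))) (zeros (w @ [y]))
       = greedy (rev (sorted_list_of_set (zeros v))) {j\<in>zeros (w @ [y]). j \<le> length v}"
    by (rule greedy_restrict)
  also have "{j\<in>zeros (w @ [y]). j \<le> length v} = zeros w"
    using assms(1) by (auto simp: zeros_snoc dest: zeros_bounds)
  finally show ?thesis unfolding short_zero_matching_def zero_matching_def zv by simp
qed

lemma short_zero_matching_snoc_zero_zero:
  assumes "length v = length w"
  shows "short_zero_matching (v @ [0]) (w @ [0]) = short_zero_matching v w"
proof -
  let ?n = "Suc (length v)"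
  have W: "zeros (w @ [0]) = insert ?n (zeros w)" using assms by (simp add: zeros_snoc)
  have "?n \<notin> zeros w" using assms zeros_bounds by force
  then have R: "zeros (w @ [0]) - {?n} = zeros w" using W by auto
  have M: "Max {j\<in>zeros (w @ [0]). j \<le> ?n} = ?n"
    by (rule Max_eqI) (use finite_zeros W in auto)
  show ?thesis unfolding short_zero_matching_def zero_matching_def rev_sorted_zeros_snoc_zero
    using M R W by (simp add: Let_def)
qed

lemma short_zero_matching_snoc_zero_zero_one:
  assumes "length v = Suc (length w)"
  shows "short_zero_matching (v @ [0]) (w @ [0, 1]) = short_zero_matching v (w @ [1])"
proof -
  have W: "zeros (w @ [0, 1]) = insert (length v) (zeros w)"
    using zeros_snoc[of "w @ [0]" 1] zeros_snoc[of w 0] assms by simp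
  have W1: "zeros (w @ [1]) = zeros w" by (simp add: zeros_snoc)
  have "length v \<notin> zeros w" using assms zeros_bounds by force
  then have R: "zeros (w @ [0, 1]) - {length v} = zeros (w @ [1])" using W W1 by auto
  have M: "Max {j\<in>zeros (w @ [0, 1]). j \<le> Suc (length v)} = length v"
    by (rule Max_eqI) (use finite_zeros W assms in \<open>auto dest: zeros_bounds\<close>)
  show ?thesis unfolding short_zero_matching_def zero_matching_def rev_sorted_zeros_snoc_zero
    using M R W by (simp add: Let_def)
qed

lemma not_short_zero_matching_snoc_zero_one_one:
  assumes "length v = Suc (length w)" "zeros w \<noteq> {}"
  shows "\<not> short_zero_matching (v @ [0]) (w @ [1, 1])"
proof -
  let ?n = "Suc (length v)"
  let ?J = "Max {j\<in>zeros w. j \<le> ?n}"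
  have W: "zeros (w @ [1, 1]) = zeros w"
    using zeros_snoc[of "w @ [1]" 1] zeros_snoc[of w 1] by simp
  have ne: "{j\<in>zeros w. j \<le> ?n} \<noteq> {}" using assms zeros_bounds by fastforce
  then have ex: "\<exists>j\<in>zeros w. j \<le> ?n" by auto
  then have "?J \<in> zeros w" using Max_in[OF _ ne] finite_zeros by auto
  then have "\<not> ?n - ?J \<le> 1" using zeros_bounds assms(1) by fastforce
  moreover have "(?n, ?J) \<in> zero_matching (v @ [0]) (w @ [1, 1])"
    unfolding zero_matching_def rev_sorted_zeros_snoc_zero W using ex by (simp add: Let_def)
  ultimately show ?thesis unfolding short_zero_matching_def by auto
qed

section \<open>Dominance of binary vectors\<close>

lemma length_chi [simp]: "length (chi a) = length a"
  unfolding chi_def by simp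

lemma chi_snoc: "chi (a @ [x]) = chi a @ [if 0 < x then 1 else 0]"
  unfolding chi_def by simp

lemma chi_binary: "set (chi a) \<subseteq> {0, 1}"
  unfolding chi_def by auto

lemma chi_binary_id: "set w \<subseteq> {0, 1} \<Longrightarrow> chi w = w"
  unfolding chi_def by (induction w) auto

lemma chi_eq_snocE:
  assumes "chi b = w @ [y]"
  obtains b' t where "b = b' @ [t]" "chi b' = w" "y = (if 0 < t then 1 else 0)"
proof -
  have "b \<noteq> []" using assms unfolding chi_def by auto
  then obtain b' t where "b = b' @ [t]" using rev_exhaust by blast
  with assms that show ?thesis by (simp add: chi_snoc)
qed

lemma dominates_snoc:
  "length v = length w \<Longrightarrow>
   dominates (v @ [x]) (w @ [y]) \<longleftrightarrow> dominates v w \<and> sum_list w + y \<le> sum_list v + x"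
  unfolding dominates_def by (auto simp: le_Suc_eq)

lemma dominates_imp_sum_le: "length v = length w \<Longrightarrow> dominates v w \<Longrightarrow> sum_list w \<le> sum_list v"
  unfolding dominates_def by (metis order.refl take_all)

lemma sum_list_binary_le_length: "set v \<subseteq> {0, 1} \<Longrightarrow> sum_list v \<le> length v"
  by (induction v) auto

lemma sum_list_binary_no_zeros: "zeros w = {} \<Longrightarrow> set w \<subseteq> {0, 1} \<Longrightarrow> sum_list w = length w"
  by (induction w rule: rev_induct) (auto simp: zeros_snoc split: if_splits)

lemma dominates1_binary_iff:
  "set v \<subseteq> {0, 1} \<Longrightarrow> set w \<subseteq> {0, 1} \<Longrightarrow>
   dominates1 v w \<longleftrightarrow> dominates v w \<and> short_zero_matching v w"
  unfolding dominates1_def short_zero_matching_def by (simp add: chi_binary_id)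

context
  fixes v w :: "nat list"
  assumes binary: "set v \<subseteq> {0, 1}" "set w \<subseteq> {0, 1}"
begin

lemma dominates1_snoc_one:
  assumes "length v = length w" "y \<in> {0, 1}"
  shows "dominates1 (v @ [1]) (w @ [y]) \<longleftrightarrow> dominates1 v w"
proof -
  have "set (v @ [1]) \<subseteq> {0, 1}" "set (w @ [y]) \<subseteq> {0, 1}" using binary assms(2) by auto
  moreover have "dominates (v @ [1]) (w @ [y]) \<longleftrightarrow> dominates v w"
    using dominates_snoc[OF assms(1)] dominates_imp_sum_le[OF assms(1)] assms(2) by auto
  ultimately show ?thesis
    using short_zero_matching_snoc_nonzero[OF assms(1)] binary by (simp add: dominates1_binary_iff)
qed

lemma dominates1_snoc_zero_zero:
  assumes "length v = length w"
  shows "dominates1 (v @ [0]) (w @ [0]) \<longleftrightarrow> dominates1 v w"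
proof -
  have "set (v @ [0]) \<subseteq> {0, 1}" "set (w @ [0]) \<subseteq> {0, 1}" using binary by auto
  moreover have "dominates (v @ [0]) (w @ [0]) \<longleftrightarrow> dominates v w"
    using dominates_snoc[OF assms] dominates_imp_sum_le[OF assms] by auto
  ultimately show ?thesis
    using short_zero_matching_snoc_zero_zero[OF assms] binary by (simp add: dominates1_binary_iff)
qed

lemma dominates1_snoc_zero_zero_one:
  assumes "length v = Suc (length w)"
  shows "dominates1 (v @ [0]) (w @ [0, 1]) \<longleftrightarrow> dominates1 v (w @ [1])"
proof -
  obtain u c where v: "v = u @ [c]"
    using assms by (metis length_Suc_conv_rev)
  have lu: "length u = length w" using assms v by simp
  have "dominates ((u @ [c]) @ [0]) ((w @ [0]) @ [1]) \<longleftrightarrow> dominates (u @ [c]) (w @ [1])"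
    using dominates_snoc[of "u @ [c]" "w @ [0]" 0 1] dominates_snoc[OF lu, of c 0]
      dominates_snoc[OF lu, of c 1] lu by auto
  moreover have "set (v @ [0]) \<subseteq> {0, 1}" "set (w @ [0, 1]) \<subseteq> {0, 1}" "set (w @ [1]) \<subseteq> {0, 1}"
    using binary by auto
  ultimately show ?thesis
    using v short_zero_matching_snoc_zero_zero_one[OF assms] binary
    by (simp add: dominates1_binary_iff)
qed

lemma not_dominates1_snoc_zero_one_one:
  assumes "length v = Suc (length w)"
  shows "\<not> dominates1 (v @ [0]) (w @ [1, 1])"
proof (cases "zeros w = {}")
  case True
  have "sum_list v < sum_list (w @ [1, 1])"
    using sum_list_binary_no_zeros[OF True binary(2)] sum_list_binary_le_length[OF binary(1)] assms
    by simp
  then have "\<not> dominates (v @ [0]) (w @ [1, 1])"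
    using dominates_imp_sum_le[of "v @ [0]" "w @ [1, 1]"] assms by auto
  moreover have "set (v @ [0]) \<subseteq> {0, 1}" "set (w @ [1, 1]) \<subseteq> {0, 1}" using binary by auto
  ultimately show ?thesis by (simp add: dominates1_binary_iff)
next
  case False
  moreover have "set (v @ [0]) \<subseteq> {0, 1}" "set (w @ [1, 1]) \<subseteq> {0, 1}" using binary by auto
  ultimately show ?thesis
    using not_short_zero_matching_snoc_zero_one_one[OF assms] by (simp add: dominates1_binary_iff)
qed

end

lemma not_dominates1_zero_one: "\<not> dominates1 [0] [1]"
  using dominates_snoc[of "[]" "[]" 0 1] by (simp add: dominates1_def)

section \<open>Feasible demand vectors\<close>

definition carry :: "nat list \<Rightarrow> nat list \<Rightarrow> nat \<Rightarrow> int" where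
  "carry a b k = int (sum_list (take k a)) - int (sum_list (take k b))"

definition carry_feasible :: "nat list \<Rightarrow> nat list \<Rightarrow> bool" where
  "carry_feasible a b \<longleftrightarrow>
     (\<forall>k\<le>length a. 0 \<le> carry a b k \<and> (0 < k \<longrightarrow> 0 < b ! (k - 1) \<longrightarrow> carry a b k = 0))"

definition feasible_support :: "nat list \<Rightarrow> nat list \<Rightarrow> bool" where
  "feasible_support a w \<longleftrightarrow> (\<exists>b. chi b = w \<and> carry_feasible a b)"

lemma carry_0 [simp]: "carry a b 0 = 0"
  unfolding carry_def by simp

lemma carry_Suc:
  "k < length a \<Longrightarrow> length b = length a \<Longrightarrow>
   carry a b (Suc k) = carry a b k + int (a ! k) - int (b ! k)"
  unfolding carry_def by (simp add: take_Suc_conv_app_nth)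

lemma carry_feasible_Nil: "carry_feasible [] []"
  unfolding carry_feasible_def by simp

lemma carry_feasible_snoc:
  assumes "length a = length b"
  shows "carry_feasible (a @ [x]) (b @ [y]) \<longleftrightarrow> carry_feasible a b
     \<and> sum_list b + y \<le> sum_list a + x \<and> (0 < y \<longrightarrow> sum_list b + y = sum_list a + x)"
proof -
  let ?P = "\<lambda>a b k. 0 \<le> carry a b k \<and> (0 < k \<longrightarrow> 0 < b ! (k - 1) \<longrightarrow> carry a b k = 0)"
  have old: "?P (a @ [x]) (b @ [y]) k = ?P a b k" if "k \<le> length a" for k
    using that assms by (auto simp: carry_def nth_append)
  have new: "?P (a @ [x]) (b @ [y]) (Suc (length a)) \<longleftrightarrow>
      sum_list b + y \<le> sum_list a + x \<and> (0 < y \<longrightarrow> sum_list b + y = sum_list a + x)"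
    using assms by (auto simp: carry_def)
  have "carry_feasible (a @ [x]) (b @ [y]) \<longleftrightarrow>
      (\<forall>k\<le>length a. ?P (a @ [x]) (b @ [y]) k) \<and> ?P (a @ [x]) (b @ [y]) (Suc (length a))"
    unfolding carry_feasible_def by (auto simp: le_Suc_eq)
  then show ?thesis unfolding new carry_feasible_def using old by simp
qed

lemma carry_feasible_imp_sum_le:
  "carry_feasible a b \<Longrightarrow> length a = length b \<Longrightarrow> sum_list b \<le> sum_list a"
  unfolding carry_feasible_def carry_def by (metis order.refl take_all of_nat_le_iff diff_ge_0_iff_ge)

lemma carry_feasible_unique:
  "carry_feasible a b \<Longrightarrow> carry_feasible a b' \<Longrightarrow> chi b = chi b' \<Longrightarrow>
   length b = length a \<Longrightarrow> length b' = length a \<Longrightarrow> b = b'"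
proof (induction a arbitrary: b b' rule: rev_induct)
  case Nil
  then show ?case by simp
next
  case (snoc x a)
  obtain c t where b: "b = c @ [t]"
    using snoc.prems(4) by (metis length_Suc_conv_rev length_append_singleton)
  obtain c' t' where b': "b' = c' @ [t']"
    using snoc.prems(5) by (metis length_Suc_conv_rev length_append_singleton)
  have l: "length a = length c" "length a = length c'" using snoc.prems b b' by auto
  have f: "carry_feasible a c" "0 < t \<longrightarrow> sum_list c + t = sum_list a + x"
    using carry_feasible_snoc[OF l(1)] snoc.prems(1) b by auto
  have f': "carry_feasible a c'" "0 < t' \<longrightarrow> sum_list c' + t' = sum_list a + x"
    using carry_feasible_snoc[OF l(2)] snoc.prems(2) b' by auto
  have "chi c = chi c'" "(if 0 < t then 1 else 0) = (if 0 < t' then 1 else (0::nat))"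
    using snoc.prems(3) b b' l by (auto simp: chi_snoc)
  moreover from this(1) have "c = c'" using snoc.IH f(1) f'(1) l by simp
  ultimately have "t = t'" using f(2) f'(2) by (auto split: if_splits)
  with \<open>c = c'\<close> show ?case using b b' by simp
qed

lemma carry_feasible_shift_last_demand:
  assumes "length a = length c"
  shows "carry_feasible (a @ [z, 0]) (c @ [0, t]) \<longleftrightarrow> carry_feasible (a @ [z]) (c @ [t])"
  using carry_feasible_snoc[of "a @ [z]" "c @ [0]" 0 t] carry_feasible_snoc[OF assms, of z 0]
    carry_feasible_snoc[OF assms, of z t] assms
  by auto

lemma feasible_support_snocD:
  assumes "feasible_support (a @ [x]) (w @ [y])" "length w = length a"
  shows "feasible_support a w"
proof -
  obtain b0 where b0: "chi b0 = w @ [y]" "carry_feasible (a @ [x]) b0"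
    using assms(1) unfolding feasible_support_def by blast
  then obtain b t where b: "b0 = b @ [t]" "chi b = w" by (auto elim: chi_eq_snocE)
  then have "length a = length b" using assms(2) length_chi by metis
  then show ?thesis
    using carry_feasible_snoc b b0(2) unfolding feasible_support_def by blast
qed

lemma feasible_support_snoc_zero:
  assumes "feasible_support a w" "length w = length a"
  shows "feasible_support (a @ [x]) (w @ [0])"
proof -
  obtain b where b: "chi b = w" "carry_feasible a b"
    using assms(1) unfolding feasible_support_def by blast
  then have "length a = length b" using assms(2) length_chi by metis
  then have "carry_feasible (a @ [x]) (b @ [0])"
    using carry_feasible_snoc carry_feasible_imp_sum_le b(2) by fastforce
  moreover have "chi (b @ [0]) = w @ [0]" using b(1) by (simp add: chi_snoc)
  ultimately show ?thesis unfolding feasible_support_def by blast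
qed

lemma feasible_support_snoc_one:
  assumes "feasible_support a w" "length w = length a" "0 < x"
  shows "feasible_support (a @ [x]) (w @ [1])"
proof -
  obtain b where b: "chi b = w" "carry_feasible a b"
    using assms(1) unfolding feasible_support_def by blast
  then have lb: "length a = length b" using assms(2) length_chi by metis
  then have le: "sum_list b \<le> sum_list a" using carry_feasible_imp_sum_le b(2) by simp
  define t where "t = sum_list a + x - sum_list b"
  have "carry_feasible (a @ [x]) (b @ [t])"
    using carry_feasible_snoc[OF lb] b(2) le unfolding t_def by simp
  moreover have "chi (b @ [t]) = w @ [1]" using b(1) le assms(3) unfolding t_def by (simp add: chi_snoc)
  ultimately show ?thesis unfolding feasible_support_def by blast
qed

lemma feasible_support_snoc_zero_zero_one:
  assumes "length a = Suc (length w)"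
  shows "feasible_support (a @ [0]) (w @ [0, 1]) \<longleftrightarrow> feasible_support a (w @ [1])"
proof -
  obtain a0 z where a: "a = a0 @ [z]" using assms by (metis length_Suc_conv_rev)
  have shift: "carry_feasible (a @ [0]) (c @ [0, t]) \<longleftrightarrow> carry_feasible a (c @ [t])"
    if "chi c = w" for c t
  proof -
    have "length a0 = length c" using that assms a length_chi[of c] by simp
    then show ?thesis using carry_feasible_shift_last_demand[of a0 c z t] a by simp
  qed
  show ?thesis
  proof
    assume "feasible_support (a @ [0]) (w @ [0, 1])"
    then obtain b where b: "chi b = (w @ [0]) @ [1]" "carry_feasible (a @ [0]) b"
      unfolding feasible_support_def by auto
    then obtain c s t where "b = (c @ [s]) @ [t]" "chi c = w" "s = 0" "0 < t"
      by (elim chi_eq_snocE) (auto split: if_splits)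
    then have "carry_feasible a (c @ [t])" "chi (c @ [t]) = w @ [1]"
      using b(2) shift by (auto simp: chi_snoc)
    then show "feasible_support a (w @ [1])" unfolding feasible_support_def by blast
  next
    assume "feasible_support a (w @ [1])"
    then obtain b where b: "chi b = w @ [1]" "carry_feasible a b"
      unfolding feasible_support_def by auto
    then obtain c t where "b = c @ [t]" "chi c = w" "0 < t"
      by (elim chi_eq_snocE) (auto split: if_splits)
    then have "carry_feasible (a @ [0]) (c @ [0, t])" "chi (c @ [0, t]) = w @ [0, 1]"
      using b(2) shift[of c t] chi_snoc[of "c @ [0]" t] by (auto simp: chi_snoc)
    then show "feasible_support (a @ [0]) (w @ [0, 1])" unfolding feasible_support_def by blast
  qed
qed

lemma not_feasible_support_snoc_zero_one_one:
  assumes "length a = Suc (length w)"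
  shows "\<not> feasible_support (a @ [0]) (w @ [1, 1])"
proof
  obtain a0 z where a: "a = a0 @ [z]" using assms by (metis length_Suc_conv_rev)
  assume "feasible_support (a @ [0]) (w @ [1, 1])"
  then obtain b where b: "chi b = (w @ [1]) @ [1]" "carry_feasible (a @ [0]) b"
    unfolding feasible_support_def by auto
  obtain b' t where b': "b = b' @ [t]" "chi b' = w @ [1]" "0 < t"
    using b(1) by (rule chi_eq_snocE) (simp split: if_splits)
  obtain c s where c: "b' = c @ [s]" "chi c = w" "0 < s"
    using b'(2) by (rule chi_eq_snocE) (simp split: if_splits)
  have lc: "length a0 = length c" using assms a length_chi[of c] c(2) by simp
  have "carry_feasible (a0 @ [z]) (c @ [s])" "sum_list c + s + t = sum_list a0 + z"
    using carry_feasible_snoc[of "a0 @ [z]" "c @ [s]" 0 t] b(2) b' c(1) lc a by auto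
  moreover have "carry_feasible (a0 @ [z]) (c @ [s]) \<Longrightarrow> sum_list c + s = sum_list a0 + z"
    using carry_feasible_snoc[OF lc] \<open>0 < s\<close> by auto
  ultimately show False using b'(3) by simp
qed

lemma not_feasible_support_zero_one: "\<not> feasible_support [0] [1]"
proof
  assume "feasible_support [0] [1]"
  then obtain b where b: "chi b = [] @ [1]" "carry_feasible ([] @ [0]) b"
    unfolding feasible_support_def by auto
  then obtain t where "b = [] @ [t]" "0 < t"
    by (elim chi_eq_snocE) (auto split: if_splits simp: chi_def)
  then show False using b(2) carry_feasible_snoc[of "[]" "[]" 0 t] by simp
qed

lemma feasible_support_snoc_pos:
  "length w = length a \<Longrightarrow> 0 < x \<Longrightarrow> y \<in> {0, 1} \<Longrightarrow>
   feasible_support (a @ [x]) (w @ [y]) \<longleftrightarrow> feasible_support a w"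
  using feasible_support_snocD feasible_support_snoc_zero feasible_support_snoc_one by blast

lemma feasible_support_snoc_zero_zero:
  "length w = length a \<Longrightarrow> feasible_support (a @ [0]) (w @ [0]) \<longleftrightarrow> feasible_support a w"
  using feasible_support_snocD feasible_support_snoc_zero by blast

lemma binary_snoc_cases:
  assumes "set w \<subseteq> {0, 1}" "y \<in> {0, 1}"
  obtains "y = 0" | "y = 1" "w = []" | w0 where "y = 1" "w = w0 @ [0]"
    | w0 where "y = 1" "w = w0 @ [1]"
  using assms by (cases w rule: rev_exhaust) auto

theorem feasible_support_iff_dominates1:
  "length w = length a \<Longrightarrow> set w \<subseteq> {0, 1} \<Longrightarrow> feasible_support a w \<longleftrightarrow> dominates1 (chi a) w"
proof (induction a arbitrary: w rule: rev_induct)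
  case Nil
  have "zeros [] = {}" by (simp add: zeros_def)
  then show ?case
    using Nil carry_feasible_Nil
    by (simp add: feasible_support_def dominates1_def dominates_def zero_matching_def chi_def)
next
  case (snoc x a)
  obtain w' y where w: "w = w' @ [y]"
    using snoc.prems(1) by (metis length_Suc_conv_rev length_append_singleton)
  have lw: "length w' = length a" and y: "y \<in> {0, 1}" and w': "set w' \<subseteq> {0, 1}"
    using snoc.prems w by auto
  show ?case
  proof (cases "0 < x")
    case True
    then show ?thesis
      using w snoc.IH[OF lw w'] feasible_support_snoc_pos[OF lw True y]
        dominates1_snoc_one[OF chi_binary w' _ y] lw
      by (simp add: chi_snoc)
  next
    case False
    then have x: "x = 0" by simp
    from w' y show ?thesis
    proof (cases rule: binary_snoc_cases)
      case 1
      then show ?thesis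
        using w x snoc.IH[OF lw w'] feasible_support_snoc_zero_zero[OF lw]
          dominates1_snoc_zero_zero[OF chi_binary w'] lw
        by (simp add: chi_snoc)
    next
      case 2
      then show ?thesis
        using w x lw not_feasible_support_zero_one not_dominates1_zero_one by (simp add: chi_def)
    next
      case (3 w0)
      then have "length (w0 @ [1]) = length a" "set (w0 @ [1]) \<subseteq> {0, 1}" using lw w' by auto
      then show ?thesis
        using w x 3 snoc.IH feasible_support_snoc_zero_zero_one
          dominates1_snoc_zero_zero_one[OF chi_binary] by (simp add: chi_snoc)
    next
      case (4 w0)
      then have "length a = Suc (length w0)" "set w0 \<subseteq> {0, 1}" using lw w' by auto
      then show ?thesis
        using w x 4 not_feasible_support_snoc_zero_one_one
          not_dominates1_snoc_zero_one_one[OF chi_binary] by (simp add: chi_snoc)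
    qed
  qed
qed

section \<open>Flows on the graph\<close>

definition spine_succ :: "nat \<Rightarrow> nat \<Rightarrow> vtx" where
  "spine_succ n i = (if i < n then V (Suc i) 0 else S)"

definition carry_flow :: "nat \<Rightarrow> nat list \<Rightarrow> nat list \<Rightarrow> vtx \<times> vtx \<Rightarrow> real" where
  "carry_flow n a b e = (if e \<in> htop_arcs n then
     (case e of
       (V i k, v) \<Rightarrow> if k = -1 then real (a ! (i - 1))
                    else if v = V i 1 then real (b ! (i - 1)) else of_int (carry a b i)
     | (S, _) \<Rightarrow> 0)
   else 0)"

lemma htop_vertsE:
  assumes "v \<in> htop_verts n"
  obtains i where "1 \<le> i" "i \<le> n" "v = V i (-1)"
  | i where "1 \<le> i" "i \<le> n" "v = V i 0"
  | i where "1 \<le> i" "i \<le> n" "v = V i 1"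
  | "v = S"
  using assms unfolding htop_verts_def by auto

lemma V_in_htop_verts: "V i k \<in> htop_verts n \<longleftrightarrow> 1 \<le> i \<and> i \<le> n \<and> k \<in> {-1, 0, 1}"
  unfolding htop_verts_def by auto

text \<open>For \<open>n = 0\<close> the set \<open>htop_arcs 0\<close> still contains the junk arc \<open>(V 0 0, S)\<close>.\<close>

lemma htop_arcsE:
  assumes "e \<in> htop_arcs n" "0 < n"
  obtains i where "1 \<le> i" "i \<le> n" "e = (V i (-1), V i 0)"
  | i where "1 \<le> i" "i \<le> n" "e = (V i 0, V i 1)"
  | i where "1 \<le> i" "i \<le> n" "e = (V i 0, spine_succ n i)"
proof -
  consider i where "1 \<le> i" "i \<le> n" "e = (V i (-1), V i 0)"
    | i where "1 \<le> i" "i \<le> n" "e = (V i 0, V i 1)"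
    | i where "1 \<le> i" "i \<le> n - 1" "e = (V i 0, V (i + 1) 0)"
    | "e = (V n 0, S)"
    using assms unfolding htop_arcs_def by blast
  then show ?thesis
  proof cases
    case (3 i)
    then show ?thesis using that(3)[of i] by (simp add: spine_succ_def)
  next
    case 4
    then show ?thesis using assms(2) that(3)[of n] by (simp add: spine_succ_def)
  qed (use that in auto)
qed

lemma source_arc_in_htop_arcs: "1 \<le> i \<Longrightarrow> i \<le> n \<Longrightarrow> (V i (-1), V i 0) \<in> htop_arcs n"
  unfolding htop_arcs_def by auto

lemma sink_arc_in_htop_arcs: "1 \<le> i \<Longrightarrow> i \<le> n \<Longrightarrow> (V i 0, V i 1) \<in> htop_arcs n"
  unfolding htop_arcs_def by auto

lemma spine_arc_in_htop_arcs: "1 \<le> i \<Longrightarrow> i \<le> n \<Longrightarrow> (V i 0, spine_succ n i) \<in> htop_arcs n"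
  unfolding htop_arcs_def spine_succ_def by auto

lemma sink_arc_ne_spine_arc: "(V i 0, V i 1) \<noteq> (V i 0, spine_succ n i)"
  unfolding spine_succ_def by auto

lemma out_arcs_source: "1 \<le> i \<Longrightarrow> i \<le> n \<Longrightarrow> {e\<in>htop_arcs n. fst e = V i (-1)} = {(V i (-1), V i 0)}"
  unfolding htop_arcs_def by auto

lemma in_arcs_source: "{e\<in>htop_arcs n. snd e = V i (-1)} = {}"
  unfolding htop_arcs_def by auto

lemma out_arcs_spine:
  "1 \<le> i \<Longrightarrow> i \<le> n \<Longrightarrow> {e\<in>htop_arcs n. fst e = V i 0} = {(V i 0, V i 1), (V i 0, spine_succ n i)}"
  unfolding htop_arcs_def spine_succ_def by auto

lemma in_arcs_spine:
  "1 \<le> i \<Longrightarrow> i \<le> n \<Longrightarrow> {e\<in>htop_arcs n. snd e = V i 0} =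
   insert (V i (-1), V i 0) (if 1 < i then {(V (i - 1) 0, V i 0)} else {})"
  unfolding htop_arcs_def by auto

lemma out_arcs_sink: "{e\<in>htop_arcs n. fst e = V i 1} = {}"
  unfolding htop_arcs_def by auto

lemma in_arcs_sink: "1 \<le> i \<Longrightarrow> i \<le> n \<Longrightarrow> {e\<in>htop_arcs n. snd e = V i 1} = {(V i 0, V i 1)}"
  unfolding htop_arcs_def by auto

lemma out_arcs_S: "{e\<in>htop_arcs n. fst e = S} = {}"
  unfolding htop_arcs_def by auto

lemma in_arcs_S: "{e\<in>htop_arcs n. snd e = S} = {(V n 0, S)}"
  unfolding htop_arcs_def by auto

lemma netflow_tail_nonneg: "e \<in> htop_arcs n \<Longrightarrow> 0 \<le> netflow a b (fst e)"
  unfolding htop_arcs_def netflow_def by auto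

lemma flow_conservation:
  "f \<in> flows n a b \<Longrightarrow> v \<in> htop_verts n \<Longrightarrow>
   (\<Sum>e\<in>{e\<in>htop_arcs n. fst e = v}. f e) - (\<Sum>e\<in>{e\<in>htop_arcs n. snd e = v}. f e) = netflow a b v"
  unfolding flows_def by auto

context
  fixes f n a b
  assumes f: "f \<in> flows n a b"
begin

lemma flow_source_arc: "1 \<le> i \<Longrightarrow> i \<le> n \<Longrightarrow> f (V i (-1), V i 0) = real (a ! (i - 1))"
  using flow_conservation[OF f, of "V i (-1)"]
  by (simp add: V_in_htop_verts out_arcs_source in_arcs_source netflow_def)

lemma flow_sink_arc: "1 \<le> i \<Longrightarrow> i \<le> n \<Longrightarrow> f (V i 0, V i 1) = real (b ! (i - 1))"
  using flow_conservation[OF f, of "V i 1"]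
  by (simp add: V_in_htop_verts out_arcs_sink in_arcs_sink netflow_def)

lemma flow_spine_balance:
  "1 \<le> i \<Longrightarrow> i \<le> n \<Longrightarrow>
   f (V i 0, V i 1) + f (V i 0, spine_succ n i) =
   f (V i (-1), V i 0) + (if 1 < i then f (V (i - 1) 0, V i 0) else 0)"
  using flow_conservation[OF f, of "V i 0"] sink_arc_ne_spine_arc[of i n]
  by (simp add: V_in_htop_verts out_arcs_spine in_arcs_spine netflow_def split: if_splits)

lemma flow_spine_arc:
  assumes "length a = n" "length b = n"
  shows "1 \<le> i \<Longrightarrow> i \<le> n \<Longrightarrow> f (V i 0, spine_succ n i) = of_int (carry a b i)"
proof (induction i)
  case 0
  then show ?case by simp
next
  case (Suc k)
  have "carry a b (Suc k) = carry a b k + int (a ! k) - int (b ! k)"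
    using carry_Suc[of k a b] Suc.prems assms by simp
  moreover have "1 \<le> k \<Longrightarrow> f (V k 0, V (Suc k) 0) = of_int (carry a b k)"
    using Suc by (simp add: spine_succ_def)
  ultimately show ?case
    using flow_spine_balance[OF Suc.prems] flow_source_arc[OF Suc.prems]
      flow_sink_arc[OF Suc.prems] by (cases "k = 0") auto
qed

lemma flow_eq_carry_flow:
  assumes "0 < n" "length a = n" "length b = n"
  shows "f = carry_flow n a b"
proof
  fix e
  show "f e = carry_flow n a b e"
  proof (cases "e \<in> htop_arcs n")
    case False
    then have "f e = 0" using f unfolding flows_def by blast
    with False show ?thesis by (simp add: carry_flow_def)
  next
    case True
    then show ?thesis
    proof (cases rule: htop_arcsE[OF True assms(1)])
      case (1 i)
      then show ?thesis using True by (simp add: carry_flow_def flow_source_arc)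
    next
      case (2 i)
      then show ?thesis using True by (simp add: carry_flow_def flow_sink_arc)
    next
      case (3 i)
      then show ?thesis using True sink_arc_ne_spine_arc[of i n] flow_spine_arc[OF assms(2,3)]
        by (auto simp: carry_flow_def spine_succ_def)
    qed
  qed
qed

end

lemma carry_flow_source_arc:
  "1 \<le> i \<Longrightarrow> i \<le> n \<Longrightarrow> carry_flow n a b (V i (-1), V i 0) = real (a ! (i - 1))"
  using source_arc_in_htop_arcs unfolding carry_flow_def by simp

lemma carry_flow_sink_arc:
  "1 \<le> i \<Longrightarrow> i \<le> n \<Longrightarrow> carry_flow n a b (V i 0, V i 1) = real (b ! (i - 1))"
  using sink_arc_in_htop_arcs unfolding carry_flow_def by simp

lemma carry_flow_spine_arc:
  "1 \<le> i \<Longrightarrow> i \<le> n \<Longrightarrow> carry_flow n a b (V i 0, spine_succ n i) = of_int (carry a b i)"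
  using spine_arc_in_htop_arcs[of i n] unfolding carry_flow_def by (simp add: spine_succ_def)

lemma carry_flow_conservation:
  assumes "0 < n" "length a = n" "length b = n" "v \<in> htop_verts n"
  shows "(\<Sum>e\<in>{e\<in>htop_arcs n. fst e = v}. carry_flow n a b e)
       - (\<Sum>e\<in>{e\<in>htop_arcs n. snd e = v}. carry_flow n a b e) = netflow a b v"
  using assms(4)
proof (cases rule: htop_vertsE)
  case (1 i)
  then show ?thesis by (simp add: out_arcs_source in_arcs_source carry_flow_source_arc netflow_def)
next
  case (2 i)
  have "carry a b i = carry a b (i - 1) + int (a ! (i - 1)) - int (b ! (i - 1))"
    using carry_Suc[of "i - 1" a b] 2 assms(2,3) by simp
  moreover have "carry_flow n a b (V (i - 1) 0, V i 0) = of_int (carry a b (i - 1))" if "1 < i"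
  proof -
    have "spine_succ n (i - 1) = V i 0" using 2 that by (simp add: spine_succ_def)
    then show ?thesis using carry_flow_spine_arc[of "i - 1" n a b] 2 that by simp
  qed
  ultimately show ?thesis
    using 2 sink_arc_ne_spine_arc[of i n]
    by (auto simp: out_arcs_spine in_arcs_spine carry_flow_source_arc carry_flow_sink_arc
        carry_flow_spine_arc netflow_def)
next
  case (3 i)
  then show ?thesis by (simp add: out_arcs_sink in_arcs_sink carry_flow_sink_arc netflow_def)
next
  case 4
  have "carry_flow n a b (V n 0, S) = of_int (carry a b n)"
    using carry_flow_spine_arc[of n n a b] assms(1) by (simp add: spine_succ_def)
  then show ?thesis using 4 assms(2,3) by (simp add: out_arcs_S in_arcs_S netflow_def carry_def)
qed

lemma carry_flow_positive_out_arcs: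
  assumes "v \<in> htop_verts n" "carry_feasible a b" "length a = n"
  obtains e where "{e\<in>htop_arcs n. fst e = v \<and> 0 < carry_flow n a b e} \<subseteq> {e}"
  using assms(1)
proof (cases rule: htop_vertsE)
  case (1 i)
  then show ?thesis using that[of "(V i (-1), V i 0)"] out_arcs_source[of i n] by blast
next
  case (2 i)
  let ?sink = "(V i 0, V i 1)" and ?spine = "(V i 0, spine_succ n i)"
  let ?used = "if 0 < b ! (i - 1) then ?sink else ?spine"
  have unused: "carry_flow n a b (if 0 < b ! (i - 1) then ?spine else ?sink) = 0"
    using assms(2,3) 2 unfolding carry_feasible_def
    by (auto simp: carry_flow_sink_arc carry_flow_spine_arc)
  have "{e\<in>htop_arcs n. fst e = v \<and> 0 < carry_flow n a b e} \<subseteq> {?used}"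
  proof
    fix e
    assume "e \<in> {e\<in>htop_arcs n. fst e = v \<and> 0 < carry_flow n a b e}"
    then have "e = ?sink \<or> e = ?spine" "0 < carry_flow n a b e"
      using 2 out_arcs_spine[of i n] by blast+
    with unused show "e \<in> {?used}" by (cases "0 < b ! (i - 1)") auto
  qed
  then show ?thesis by (rule that)
next
  case (3 i)
  then show ?thesis using that out_arcs_sink[of n i] by blast
next
  case 4
  then show ?thesis using that out_arcs_S[of n] by blast
qed

lemma carry_flow_unsplittable:
  assumes n: "0 < n" and a: "length a = n" and b: "length b = n" and feasible: "carry_feasible a b"
  shows "unsplittable n a b (carry_flow n a b)"
proof -
  let ?f = "carry_flow n a b"
  have carry_nonneg: "0 \<le> carry a b i" if "i \<le> n" for i
    using feasible that a unfolding carry_feasible_def by auto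
  have nonneg_int: "0 \<le> ?f e \<and> ?f e \<in> \<int>" if "e \<in> htop_arcs n" for e
    using that n
    by (cases rule: htop_arcsE)
      (simp_all add: carry_flow_source_arc carry_flow_sink_arc carry_flow_spine_arc carry_nonneg)
  have "?f \<in> flows n a b"
    unfolding flows_def
  proof (intro CollectI conjI allI impI ballI)
    show "?f e = 0" if "e \<notin> htop_arcs n" for e using that by (simp add: carry_flow_def)
  qed (simp_all add: nonneg_int carry_flow_conservation[OF n a b])
  moreover have "card {e\<in>htop_arcs n. fst e = v \<and> 0 < ?f e} \<le> 1" if v: "v \<in> htop_verts n" for v
  proof -
    obtain e where "{e\<in>htop_arcs n. fst e = v \<and> 0 < ?f e} \<subseteq> {e}"
      using carry_flow_positive_out_arcs[OF v feasible a] .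
    then show ?thesis using card_mono[of "{e}"] by simp
  qed
  moreover have "\<forall>v\<in>htop_verts n. netflow a b v < 0 \<longrightarrow> (\<forall>e\<in>htop_arcs n. fst e = v \<longrightarrow> ?f e = 0)"
    using netflow_tail_nonneg[of _ n a b] by force
  ultimately show ?thesis using nonneg_int unfolding unsplittable_def by blast
qed

lemma unsplittable_imp_carry_feasible:
  assumes u: "unsplittable n a b f" and a: "length a = n" and b: "length b = n"
  shows "carry_feasible a b"
  unfolding carry_feasible_def
proof (intro allI impI conjI)
  have f: "f \<in> flows n a b" and nonneg: "\<forall>e\<in>htop_arcs n. 0 \<le> f e"
    and card: "\<forall>v\<in>htop_verts n. card {e\<in>htop_arcs n. fst e = v \<and> 0 < f e} \<le> 1"
    using u unfolding unsplittable_def flows_def by auto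
  have carry_nonneg: "0 \<le> carry a b k" if "1 \<le> k" "k \<le> n" for k
    using nonneg spine_arc_in_htop_arcs[OF that] flow_spine_arc[OF f a b that] by fastforce
  fix k
  assume k: "k \<le> length a"
  then show "0 \<le> carry a b k" using carry_nonneg a by (cases "k = 0") auto
  assume "0 < k" "0 < b ! (k - 1)"
  then have k1: "1 \<le> k" "k \<le> n" and sink: "0 < f (V k 0, V k 1)"
    using k a flow_sink_arc[OF f] by auto
  show "carry a b k = 0"
  proof (rule ccontr)
    assume "carry a b k \<noteq> 0"
    then have "0 < f (V k 0, spine_succ n k)"
      using carry_nonneg[OF k1] flow_spine_arc[OF f a b k1] by simp
    then have "{e\<in>htop_arcs n. fst e = V k 0 \<and> 0 < f e} = {(V k 0, V k 1), (V k 0, spine_succ n k)}"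
      using sink out_arcs_spine[OF k1] by auto
    moreover have "card {e\<in>htop_arcs n. fst e = V k 0 \<and> 0 < f e} \<le> 1"
      using card k1 by (simp add: V_in_htop_verts)
    ultimately show False using sink_arc_ne_spine_arc[of k n] by simp
  qed
qed

lemma unsplittable_iff_carry_flow:
  assumes n: "0 < n" and a: "length a = n" and b: "length b = n"
  shows "unsplittable n a b f \<longleftrightarrow> carry_feasible a b \<and> f = carry_flow n a b"
proof
  assume u: "unsplittable n a b f"
  then have "f \<in> flows n a b" unfolding unsplittable_def by blast
  then show "carry_feasible a b \<and> f = carry_flow n a b"
    using unsplittable_imp_carry_feasible[OF u a b] flow_eq_carry_flow[OF _ n a b] by blast
next
  assume "carry_feasible a b \<and> f = carry_flow n a b"
  then show "unsplittable n a b f" using carry_flow_unsplittable[OF n a b] by blast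
qed

lemma ex1_carry_feasible_with_support:
  assumes "length j = length a" "set j \<subseteq> {0, 1}" "dominates1 (chi a) j"
  shows "\<exists>!b. chi b = j \<and> carry_feasible a b"
proof -
  have "feasible_support a j" using feasible_support_iff_dominates1[OF assms(1,2)] assms(3) by simp
  then obtain b where b: "chi b = j" "carry_feasible a b" unfolding feasible_support_def by blast
  show ?thesis
  proof (rule ex1I[of _ b])
    show "chi b = j \<and> carry_feasible a b" using b by simp
  next
    fix b'
    assume b': "chi b' = j \<and> carry_feasible a b'"
    then have "length b' = length a" "length b = length a"
      using b(1) assms(1) length_chi by metis+
    then show "b' = b" using carry_feasible_unique[of a b' b] b b' by simp
  qed
qed

theorem lemma5p12:
  fixes n :: nat and a :: "nat list"
  assumes "0 < n" and "length a = n"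
  shows "(\<forall>j. length j = n \<and> set j \<subseteq> {0, 1} \<and> dominates1 (chi a) j \<longrightarrow>
            (\<exists>!b. length b = n \<and> chi b = j \<and> (\<exists>f. unsplittable n a b f))
          \<and> (\<forall>b. length b = n \<and> chi b = j \<and> (\<exists>f. unsplittable n a b f) \<longrightarrow>
                 (\<exists>!f. unsplittable n a b f)))
       \<and> (\<forall>b. length b = n \<and> \<not> dominates1 (chi a) (chi b) \<longrightarrow>
              \<not> (\<exists>f. unsplittable n a b f))"
proof (intro conjI allI impI)
  fix j
  assume j: "length j = n \<and> set j \<subseteq> {0, 1} \<and> dominates1 (chi a) j"
  have "(length b = n \<and> chi b = j \<and> (\<exists>f. unsplittable n a b f)) \<longleftrightarrow> chi b = j \<and> carry_feasible a b"
    for b using unsplittable_iff_carry_flow[OF assms, of b] j length_chi[of b] by auto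
  then show "\<exists>!b. length b = n \<and> chi b = j \<and> (\<exists>f. unsplittable n a b f)"
    using ex1_carry_feasible_with_support[of j a] j assms(2) by simp
next
  fix j b
  assume "length b = n \<and> chi b = j \<and> (\<exists>f. unsplittable n a b f)"
  then show "\<exists>!f. unsplittable n a b f" using unsplittable_iff_carry_flow[OF assms, of b] by auto
next
  fix b
  assume b: "length b = n \<and> \<not> dominates1 (chi a) (chi b)"
  then have "\<not> carry_feasible a b"
    using feasible_support_iff_dominates1[of "chi b" a] chi_binary[of b] assms(2)
    unfolding feasible_support_def by auto
  then show "\<not> (\<exists>f. unsplittable n a b f)" using unsplittable_iff_carry_flow[OF assms] b by blast
qed

end
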